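(* Let $0<p_0<1$, $0\le\beta<1$, $\epsilon>0$, $\omega\ge 0$, and let $\alpha\in[0,1]$ satisfy $$\alpha\le\frac{1-\cos[\beta\arccos(1-2p_0)]}{2p_0}.$$ Put $T_c=\frac{\arccos(1-2p_0)}{\epsilon}$. Let $\omega(t),\epsilon_x(t),\epsilon_y(t)$ be real-valued functions of time with $|\omega(t)|\le\omega$ and $\sqrt{\epsilon_x^2(t)+\epsilon_y^2(t)}\le\epsilon$, and let $H(t)=[1+\omega(t)]I_z+\epsilon_x(t)I_x+\epsilon_y(t)I_y$. Suppose the pure state $|\psi(t)\rangle$ of a single qubit evolves according to $\frac{d}{dt}|\psi(t)\rangle=-iH(t)|\psi(t)\rangle$ from an initial state $|\psi(0)\rangle$ satisfying $|\langle\psi(0)|1\rangle|^2\le\alpha p_0$. Then for every $t\in[0,(1-\beta)T_c]$ the state lies in $\mathcal{D}_c=\{|\psi\rangle: |\langle 0|\psi\rangle|^2\ge 1-p_0\}$; equivalently, if a projective measurement of $\sigma_z$ is made at time $t$, the probability of failure $p=|\langle 1|\psi(t)\rangle|^2$ is at most $p_0$.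
   Context: $\sigma_x=\begin{pmatrix}0&1\\1&0\end{pmatrix}$, $\sigma_y=\begin{pmatrix}0&-i\\i&0\end{pmatrix}$, $\sigma_z=\begin{pmatrix}1&0\\0&-1\end{pmatrix}$ are the Pauli matrices and $I_j=\frac12\sigma_j$ for $j=x,y,z$. $|0\rangle=(1,0)^T$ and $|1\rangle=(0,1)^T$ are the eigenvectors of $\sigma_z$ with eigenvalues $1$ and $-1$. Units with $\hbar=1$. The "probability of failure" is the probability that a $\sigma_z$ measurement yields $|1\rangle$. *)

theory Defs
  imports "HOL-Analysis.Analysis"
begin

text \<open>Single-qubit state vectors are pairs (amplitude of |0>, amplitude of |1>)
  in complex x complex.\<close>

type_synonym qstate = "complex \<times> complex"

definition ket0 :: qstate where "ket0 = (1, 0)"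
definition ket1 :: qstate where "ket1 = (0, 1)"

definition braket :: "qstate \<Rightarrow> qstate \<Rightarrow> complex" where
  "braket u v = cnj (fst u) * fst v + cnj (snd u) * snd v"

definition cscale :: "complex \<Rightarrow> qstate \<Rightarrow> qstate" where
  "cscale c u = (c * fst u, c * snd u)"

definition sigma_x :: "qstate \<Rightarrow> qstate" where
  "sigma_x u = (snd u, fst u)"
definition sigma_y :: "qstate \<Rightarrow> qstate" where
  "sigma_y u = (- \<i> * snd u, \<i> * fst u)"
definition sigma_z :: "qstate \<Rightarrow> qstate" where
  "sigma_z u = (fst u, - snd u)"

definition I_x :: "qstate \<Rightarrow> qstate" where "I_x u = cscale (1/2) (sigma_x u)"
definition I_y :: "qstate \<Rightarrow> qstate" where "I_y u = cscale (1/2) (sigma_y u)"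
definition I_z :: "qstate \<Rightarrow> qstate" where "I_z u = cscale (1/2) (sigma_z u)"

definition hamiltonian :: "real \<Rightarrow> real \<Rightarrow> real \<Rightarrow> qstate \<Rightarrow> qstate" where
  "hamiltonian om ex ey u =
     cscale (complex_of_real (1 + om)) (I_z u) + cscale (complex_of_real ex) (I_x u)
     + cscale (complex_of_real ey) (I_y u)"

end

theory Submission
  imports Defs
begin

text \<open>The generator \<open>-iH\<close> is skew-Hermitian, so the norm of the state is conserved. Only the
  transverse field \<open>\<epsilon>\<^sub>x I\<^sub>x + \<epsilon>\<^sub>y I\<^sub>y\<close> moves population between \<open>|0\<rangle>\<close> and \<open>|1\<rangle>\<close>, and for a unit
  state the population \<open>q = |\<langle>1|\<psi>\<rangle>|\<^sup>2\<close> of \<open>|1\<rangle>\<close> obeys \<open>q' \<le> \<epsilon> \<surd>(q(1-q))\<close>. Writing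
  \<open>q = (1 - cos \<theta>)/2\<close>, this says the polar angle \<open>\<theta>\<close> on the Bloch sphere grows at most at rate \<open>\<epsilon>\<close>;
  a comparison argument (against envelopes that grow strictly faster, followed by a limit) makes
  this rigorous. The hypothesis on \<open>\<alpha>\<close> puts the initial angle below \<open>\<beta> arccos(1 - 2p\<^sub>0)\<close>, so up to
  time \<open>(1 - \<beta>) T\<^sub>c\<close> the angle stays below \<open>arccos(1 - 2p\<^sub>0)\<close>, i.e. \<open>q \<le> p\<^sub>0\<close>.\<close>

lemma has_vector_derivative_snd:
  "(f has_vector_derivative v) F \<Longrightarrow> ((\<lambda>t. snd (f t)) has_vector_derivative snd v) F"
  unfolding has_vector_derivative_def by (drule has_derivative_snd) simp

lemma has_real_derivative_norm_power2:
  fixes f :: "real \<Rightarrow> 'a::real_inner"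
  assumes "(f has_vector_derivative v) (at t within S)"
  shows "((\<lambda>t. (norm (f t))\<^sup>2) has_real_derivative 2 * (f t \<bullet> v)) (at t within S)"
proof -
  have "((\<lambda>t. f t \<bullet> f t) has_derivative (\<lambda>h. f t \<bullet> (h *\<^sub>R v) + (h *\<^sub>R v) \<bullet> f t)) (at t within S)"
    using assms unfolding has_vector_derivative_def by (intro has_derivative_inner)
  then show ?thesis
    unfolding power2_norm_eq_inner has_field_derivative_def
    by (simp add: inner_commute algebra_simps mult_commute_abs)
qed

lemma braket_self_eq_1_iff: "braket u u = 1 \<longleftrightarrow> norm u = 1"
proof -
  have "braket u u = complex_of_real ((norm u)\<^sup>2)"
    by (cases u) (simp add: braket_def norm_Pair complex_mult_cnj cmod_power2 mult.commute)
  moreover have "(norm u)\<^sup>2 = 1 \<longleftrightarrow> norm u = 1"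
    using power2_eq_1_iff[of "norm u"] norm_ge_zero[of u] by auto
  ultimately show ?thesis
    by (metis of_real_eq_1_iff)
qed

lemma norm_power2_qstate: "(norm (u :: qstate))\<^sup>2 = (norm (fst u))\<^sup>2 + (norm (snd u))\<^sup>2"
  by (cases u) (simp add: norm_Pair)

lemma inner_schroedinger_generator:
  "u \<bullet> cscale (- \<i>) (hamiltonian w ex ey u) = 0"
  by (cases u) (simp add: cscale_def hamiltonian_def I_x_def I_y_def I_z_def sigma_x_def
      sigma_y_def sigma_z_def inner_complex_def field_simps)

lemma schroedinger_norm_constant:
  fixes \<psi> :: "real \<Rightarrow> qstate"
  assumes ode: "\<And>t. t \<ge> 0 \<Longrightarrow>
       (\<psi> has_vector_derivative cscale (- \<i>) (hamiltonian (w t) (ex t) (ey t) (\<psi> t)))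
         (at t within {0..})"
    and "0 \<le> t"
  shows "norm (\<psi> t) = norm (\<psi> 0)"
proof -
  have "((\<lambda>t. (norm (\<psi> t))\<^sup>2) has_real_derivative 0) (at s within {0..})" if "0 \<le> s" for s
    using has_real_derivative_norm_power2[OF ode[OF that]] inner_schroedinger_generator by simp
  then have "(norm (\<psi> t))\<^sup>2 = (norm (\<psi> 0))\<^sup>2"
    using has_field_derivative_zero_constant[of "{0::real..}"] \<open>0 \<le> t\<close> by fastforce
  then show ?thesis
    by simp
qed

lemma excited_population_rate_le:
  fixes u :: qstate
  assumes "norm u = 1" and "sqrt (ex\<^sup>2 + ey\<^sup>2) \<le> \<epsilon>"
  defines "q \<equiv> (norm (snd u))\<^sup>2"
  shows "2 * (snd u \<bullet> snd (cscale (- \<i>) (hamiltonian w ex ey u))) \<le> \<epsilon> * sqrt (q * (1 - q))"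
proof -
  obtain a b where u: "u = (a, b)" by fastforce
  define z where "z = - \<i> * complex_of_real ex + complex_of_real ey"
  have "cmod z = sqrt (ex\<^sup>2 + ey\<^sup>2)"
    by (simp add: z_def cmod_def power2_eq_square)
  have "2 * (snd u \<bullet> snd (cscale (- \<i>) (hamiltonian w ex ey u))) = Re (cnj b * z * a)"
    unfolding u z_def
    by (simp add: cscale_def hamiltonian_def I_x_def I_y_def I_z_def sigma_x_def
      sigma_y_def sigma_z_def inner_complex_def algebra_simps) (simp add: field_simps)
  also have "\<dots> \<le> cmod (cnj b * z * a)"
    by (rule complex_Re_le_cmod)
  also have "\<dots> = sqrt (ex\<^sup>2 + ey\<^sup>2) * (norm a * norm b)"
    using \<open>cmod z = _\<close> by (simp add: norm_mult)
  also have "\<dots> \<le> \<epsilon> * (norm a * norm b)"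
    using assms(2) by (intro mult_right_mono) auto
  also have "norm a * norm b = sqrt (q * (1 - q))"
  proof -
    have "1 - q = (norm a)\<^sup>2"
      using assms(1) norm_power2_qstate[of u] unfolding q_def u by simp
    then show ?thesis
      unfolding q_def u by (simp add: real_sqrt_mult mult.commute)
  qed
  finally show ?thesis .
qed

lemma pos_on_interval_if_increasing_at_zeros:
  fixes g g' :: "real \<Rightarrow> real"
  assumes deriv: "\<And>t. t \<in> {a..b} \<Longrightarrow> (g has_real_derivative g' t) (at t within {a..b})"
    and start: "0 < g a"
    and zeros: "\<And>t. t \<in> {a..b} \<Longrightarrow> g t = 0 \<Longrightarrow> 0 < g' t"
    and t: "t \<in> {a..b}"
  shows "0 < g t"
proof (rule ccontr)
  assume "\<not> 0 < g t"
  have cont: "continuous_on {a..b} g"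
    using deriv by (rule DERIV_continuous_on)
  define Z where "Z = {a..t} \<inter> g -` {..0}"
  have "closed Z"
    unfolding Z_def using t
    by (intro continuous_closed_preimage continuous_on_subset[OF cont]) auto
  moreover have "t \<in> Z" "bdd_below Z"
    using t \<open>\<not> 0 < g t\<close> unfolding Z_def by (auto intro: bdd_belowI[of _ a])
  ultimately have t1: "Inf Z \<in> Z" and first: "\<And>s. s \<in> Z \<Longrightarrow> Inf Z \<le> s"
    by (auto intro: closed_contains_Inf cInf_lower)
  define t1 where "t1 = Inf Z"
  have t1_in: "t1 \<in> {a..b}" "g t1 \<le> 0"
    using t1 t unfolding t1_def Z_def by auto
  \<comment> \<open>the first point where g is nonpositive is a zero, at which g increases\<close>
  obtain x where x: "x \<in> {a..t1}" "g x = 0"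
    using IVT2'[of g t1 0 a] t1_in start continuous_on_subset[OF cont, of "{a..t1}"] by auto
  then have "x \<in> Z"
    using t1 unfolding t1_def Z_def by auto
  then have zero: "g t1 = 0"
    using first x unfolding t1_def by force
  then have "a < t1"
    using t1_in start by (cases "t1 = a") auto
  obtain d where d: "0 < d" "\<And>h. 0 < h \<Longrightarrow> t1 - h \<in> {a..b} \<Longrightarrow> h < d \<Longrightarrow> g (t1 - h) < g t1"
    using has_real_derivative_pos_inc_left[OF deriv[OF t1_in(1)] zeros[OF t1_in(1) zero]] by auto
  define h where "h = min (d/2) (t1 - a)"
  have h: "0 < h" "t1 - h \<in> {a..b}" "h < d"
    using d \<open>a < t1\<close> t1_in unfolding h_def by auto
  then have "t1 - h \<in> Z"
    using d(2)[OF h] zero t1 unfolding t1_def Z_def by auto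
  then show False
    using first h unfolding t1_def by force
qed

lemma below_cosine_envelope_strict:
  fixes q q' :: "real \<Rightarrow> real"
  assumes deriv: "\<And>t. t \<in> {0..T} \<Longrightarrow> (q has_real_derivative q' t) (at t within {0..T})"
    and rate: "\<And>t. t \<in> {0..T} \<Longrightarrow> q' t \<le> \<epsilon> * sqrt (q t * (1 - q t))"
    and init: "q 0 \<le> (1 - cos \<theta>) / 2"
    and "0 \<le> \<theta>" "\<theta> < \<eta>" "0 \<le> \<epsilon>" "\<epsilon> < c" "\<eta> + c * T < pi"
    and t: "t \<in> {0..T}"
  shows "q t < (1 - cos (\<eta> + c * t)) / 2"
proof -
  define \<phi> where "\<phi> s = \<eta> + c * s" for s
  have \<phi>_range: "0 < \<phi> s \<and> \<phi> s < pi" if "s \<in> {0..T}" for s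
  proof -
    have "c * s \<le> c * T" "0 \<le> c * s"
      using that assms by (auto intro: mult_left_mono)
    then show ?thesis
      using assms unfolding \<phi>_def by linarith
  qed
  define g where "g s = (1 - cos (\<phi> s)) / 2 - q s" for s
  have "0 < g t"
  proof (rule pos_on_interval_if_increasing_at_zeros[OF _ _ _ t])
    show "(g has_real_derivative c * sin (\<phi> s) / 2 - q' s) (at s within {0..T})"
      if "s \<in> {0..T}" for s
      unfolding g_def[abs_def] \<phi>_def
      by (auto intro!: derivative_eq_intros deriv[OF that] simp: algebra_simps)
    have "cos (\<phi> 0) < cos \<theta>"
      using \<phi>_range[of 0] t assms unfolding \<phi>_def by (intro cos_monotone_0_pi) auto
    then show "0 < g 0"
      using init unfolding g_def by simp
    show "0 < c * sin (\<phi> s) / 2 - q' s" if s: "s \<in> {0..T}" and "g s = 0" for s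
    proof -
      have sin_pos: "0 < sin (\<phi> s)"
        using \<phi>_range[OF s] by (intro sin_gt_zero) auto
      \<comment> \<open>at a touching point the rate bound is \<open>\<epsilon> sin \<phi> / 2\<close>, below the envelope's slope\<close>
      have qs: "q s = (1 - cos (\<phi> s)) / 2"
        using \<open>g s = 0\<close> unfolding g_def by simp
      have "q s * (1 - q s) = (1 - (cos (\<phi> s))\<^sup>2) / 4"
        unfolding qs by (simp add: power2_eq_square field_simps)
      also have "\<dots> = (sin (\<phi> s) / 2)\<^sup>2"
        by (simp add: sin_squared_eq power_divide)
      finally have "q s * (1 - q s) = (sin (\<phi> s) / 2)\<^sup>2" .
      then have "q' s \<le> \<epsilon> * (sin (\<phi> s) / 2)"
        using rate[OF s] sin_pos by simp
      also have "\<dots> < c * sin (\<phi> s) / 2"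
        using sin_pos assms by simp
      finally show ?thesis by simp
    qed
  qed
  then show ?thesis
    unfolding g_def \<phi>_def by simp
qed

lemma below_cosine_envelope:
  fixes q q' :: "real \<Rightarrow> real"
  assumes deriv: "\<And>t. t \<in> {0..T} \<Longrightarrow> (q has_real_derivative q' t) (at t within {0..T})"
    and rate: "\<And>t. t \<in> {0..T} \<Longrightarrow> q' t \<le> \<epsilon> * sqrt (q t * (1 - q t))"
    and init: "q 0 \<le> (1 - cos \<theta>) / 2"
    and "0 \<le> \<theta>" "0 \<le> \<epsilon>" "\<theta> + \<epsilon> * T < pi"
    and t: "t \<in> {0..T}"
  shows "q t \<le> (1 - cos (\<theta> + \<epsilon> * t)) / 2"
proof (rule tendsto_le[OF trivial_limit_at_right_real])
  show "((\<lambda>\<delta>. (1 - cos ((\<theta> + \<delta>) + (\<epsilon> + \<delta>) * t)) / 2) \<longlongrightarrow> (1 - cos (\<theta> + \<epsilon> * t)) / 2)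
      (at_right 0)"
    by (auto intro!: tendsto_eq_intros)
  have "((\<lambda>\<delta>. (\<theta> + \<delta>) + (\<epsilon> + \<delta>) * T) \<longlongrightarrow> \<theta> + \<epsilon> * T) (at_right 0)"
    by (auto intro!: tendsto_eq_intros)
  then have "eventually (\<lambda>\<delta>. (\<theta> + \<delta>) + (\<epsilon> + \<delta>) * T < pi) (at_right 0)"
    using assms by (intro order_tendstoD) auto
  then show "eventually (\<lambda>\<delta>. q t \<le> (1 - cos ((\<theta> + \<delta>) + (\<epsilon> + \<delta>) * t)) / 2) (at_right 0)"
    using eventually_at_right_less[of 0]
  proof eventually_elim
    case (elim \<delta>)
    show ?case
      using below_cosine_envelope_strict[OF deriv rate init, of "\<theta> + \<delta>" "\<epsilon> + \<delta>"] elim assms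
      by (intro less_imp_le) auto
  qed
qed simp

lemma excited_population_le_cosine:
  fixes \<psi> :: "real \<Rightarrow> qstate"
  assumes ode: "\<And>t. t \<ge> 0 \<Longrightarrow>
       (\<psi> has_vector_derivative cscale (- \<i>) (hamiltonian (w t) (ex t) (ey t) (\<psi> t)))
         (at t within {0..})"
    and unit: "norm (\<psi> 0) = 1"
    and eps_bound: "\<And>t. sqrt ((ex t)\<^sup>2 + (ey t)\<^sup>2) \<le> \<epsilon>"
    and init: "(norm (snd (\<psi> 0)))\<^sup>2 \<le> (1 - cos \<theta>) / 2"
    and "0 \<le> \<theta>" "0 \<le> \<epsilon>" "\<theta> + \<epsilon> * T < pi"
    and t: "t \<in> {0..T}"
  shows "(norm (snd (\<psi> t)))\<^sup>2 \<le> (1 - cos (\<theta> + \<epsilon> * t)) / 2"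
proof (rule below_cosine_envelope[where q = "\<lambda>t. (norm (snd (\<psi> t)))\<^sup>2" and T = T])
  let ?q' = "\<lambda>s. 2 * (snd (\<psi> s) \<bullet> snd (cscale (- \<i>) (hamiltonian (w s) (ex s) (ey s) (\<psi> s))))"
  show "((\<lambda>t. (norm (snd (\<psi> t)))\<^sup>2) has_real_derivative ?q' s) (at s within {0..T})"
    if "s \<in> {0..T}" for s
    using has_field_derivative_subset[OF
        has_real_derivative_norm_power2[OF has_vector_derivative_snd[OF ode]], of s "{0..T}"] that
    by auto
  show "?q' s \<le> \<epsilon> * sqrt ((norm (snd (\<psi> s)))\<^sup>2 * (1 - (norm (snd (\<psi> s)))\<^sup>2))"
    if "s \<in> {0..T}" for s
    using excited_population_rate_le[OF _ eps_bound] schroedinger_norm_constant[OF ode] unit that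
    by simp
qed (use assms in auto)

theorem theorem1:
  fixes p0 \<beta> \<epsilon> \<omega> \<alpha> :: real
    and \<omega>t \<epsilon>x \<epsilon>y :: "real \<Rightarrow> real"
    and \<psi> :: "real \<Rightarrow> qstate"
  assumes p0: "0 < p0" "p0 < 1"
    and beta: "0 \<le> \<beta>" "\<beta> < 1"
    and eps: "\<epsilon> > 0"
    and om: "\<omega> \<ge> 0"
    and alpha: "0 \<le> \<alpha>" "\<alpha> \<le> 1"
    and alpha_bound: "\<alpha> \<le> (1 - cos (\<beta> * arccos (1 - 2 * p0))) / (2 * p0)"
    and om_bound: "\<And>t. \<bar>\<omega>t t\<bar> \<le> \<omega>"
    and eps_bound: "\<And>t. sqrt ((\<epsilon>x t)\<^sup>2 + (\<epsilon>y t)\<^sup>2) \<le> \<epsilon>"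
    and pure: "braket (\<psi> 0) (\<psi> 0) = 1"
    and ode: "\<And>t. t \<ge> 0 \<Longrightarrow>
       (\<psi> has_vector_derivative cscale (- \<i>) (hamiltonian (\<omega>t t) (\<epsilon>x t) (\<epsilon>y t) (\<psi> t)))
         (at t within {0..})"
    and init: "(cmod (braket (\<psi> 0) ket1))\<^sup>2 \<le> \<alpha> * p0"
  shows "\<forall>t \<in> {0 .. (1 - \<beta>) * (arccos (1 - 2 * p0) / \<epsilon>)}.
           (cmod (braket ket0 (\<psi> t)))\<^sup>2 \<ge> 1 - p0 \<and> (cmod (braket ket1 (\<psi> t)))\<^sup>2 \<le> p0"
proof -
  define A where "A = arccos (1 - 2 * p0)"
  define T where "T = (1 - \<beta>) * (A / \<epsilon>)"
  have A: "0 < A" "A < pi" "cos A = 1 - 2 * p0"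
    using arccos_lt_bounded[of "1 - 2 * p0"] p0 unfolding A_def by auto
  have reach: "\<beta> * A + \<epsilon> * T = A"
    using eps unfolding T_def by (simp add: field_simps)
  have unit: "norm (\<psi> 0) = 1"
    using pure braket_self_eq_1_iff by blast
  have "(norm (snd (\<psi> 0)))\<^sup>2 \<le> \<alpha> * p0"
    using init by (simp add: braket_def ket1_def)
  also have "\<dots> \<le> (1 - cos (\<beta> * A)) / 2"
    using alpha_bound p0 unfolding A_def by (simp add: field_simps)
  finally have init_angle: "(norm (snd (\<psi> 0)))\<^sup>2 \<le> (1 - cos (\<beta> * A)) / 2" .
  show ?thesis
  proof
    fix t assume "t \<in> {0 .. (1 - \<beta>) * (arccos (1 - 2 * p0) / \<epsilon>)}"
    then have t: "t \<in> {0..T}"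
      unfolding T_def A_def .
    have "(norm (snd (\<psi> t)))\<^sup>2 \<le> (1 - cos (\<beta> * A + \<epsilon> * t)) / 2"
      using excited_population_le_cosine[OF ode unit eps_bound init_angle _ _ _ t] beta eps A reach
      by auto
    also have "\<dots> \<le> (1 - cos A) / 2"
    proof -
      have "\<epsilon> * t \<le> \<epsilon> * T" "0 \<le> \<epsilon> * t" "0 \<le> \<beta> * A"
        using t eps beta A(1) by auto
      then have "cos A \<le> cos (\<beta> * A + \<epsilon> * t)"
        using A reach by (intro cos_monotone_0_pi_le) auto
      then show ?thesis
        by simp
    qed
    finally have "(norm (snd (\<psi> t)))\<^sup>2 \<le> p0"
      using A by simp
    moreover have "(norm (fst (\<psi> t)))\<^sup>2 + (norm (snd (\<psi> t)))\<^sup>2 = 1"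
      using schroedinger_norm_constant[OF ode] unit norm_power2_qstate[of "\<psi> t"] t by simp
    ultimately show "(cmod (braket ket0 (\<psi> t)))\<^sup>2 \<ge> 1 - p0 \<and> (cmod (braket ket1 (\<psi> t)))\<^sup>2 \<le> p0"
      by (simp add: braket_def ket0_def ket1_def)
  qed
qed

end
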